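(* Let $q$ be a prime power and let $\Gamma$ be a projective bundle in $\mathrm{PG}(2,q)$. Then every line $\ell$ of $\mathrm{PG}(2,q)$ has exactly $q+1$ tangent ovals in $\Gamma$, exactly one through each point of $\ell$. Moreover: if $q$ is even, all the $q+1$ tangent ovals of $\ell$ pass through a common point; if $q$ is odd, every point not on $\ell$ lies on either zero or exactly two of the tangent ovals of $\ell$.
   Context: $\mathrm{PG}(2,q)$ is the projective plane whose points and lines are the 1- and 2-dimensional subspaces of $\mathbb{F}_q^3$ (it has $q^2+q+1$ points, each line has $q+1$ points). An oval is a set of $q+1$ points of $\mathrm{PG}(2,q)$ such that every line meets it in at most two points. A projective bundle is a collection of $q^2+q+1$ ovals of $\mathrm{PG}(2,q)$ any two of which intersect in exactly one point. An oval of $\Gamma$ is tangent to a line $\ell$ if it meets $\ell$ in exactly one point. *)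

theory Defs
  imports Main "HOL-Library.Cardinality"
begin

text \<open>The projective plane PG(2,q) over a finite field 'a with q = CARD('a).
  Vectors of F_q^3 are triples; points are 1-dimensional subspaces and lines
  are 2-dimensional subspaces, both represented as sets of vectors.
  A point is incident with a line iff the subspace is contained in it.\<close>

type_synonym 'a vec3 = "'a \<times> 'a \<times> 'a"

definition smul3 :: "'a::field \<Rightarrow> 'a vec3 \<Rightarrow> 'a vec3" where
  "smul3 c v = (case v of (x, y, z) \<Rightarrow> (c * x, c * y, c * z))"

definition add3 :: "'a::field vec3 \<Rightarrow> 'a vec3 \<Rightarrow> 'a vec3" where
  "add3 u w = (case u of (x, y, z) \<Rightarrow> case w of (x', y', z') \<Rightarrow> (x + x', y + y', z + z'))"

definition zero3 :: "'a::field vec3" where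
  "zero3 = (0, 0, 0)"

definition span1 :: "'a::field vec3 \<Rightarrow> 'a vec3 set" where
  "span1 v = {smul3 c v | c. True}"

definition span2 :: "'a::field vec3 \<Rightarrow> 'a vec3 \<Rightarrow> 'a vec3 set" where
  "span2 u w = {add3 (smul3 s u) (smul3 t w) | s t. True}"

definition lin_indep2 :: "'a::field vec3 \<Rightarrow> 'a vec3 \<Rightarrow> bool" where
  "lin_indep2 u w \<longleftrightarrow> (\<forall>s t. add3 (smul3 s u) (smul3 t w) = zero3 \<longrightarrow> s = 0 \<and> t = 0)"

definition pg_points :: "'a::field vec3 set set" where
  "pg_points = {span1 v | v. v \<noteq> zero3}"

definition pg_lines :: "'a::field vec3 set set" where
  "pg_lines = {span2 u w | u w. lin_indep2 u w}"

definition on_line :: "'a vec3 set set \<Rightarrow> 'a vec3 set \<Rightarrow> 'a vec3 set set" where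
  "on_line C l = {P \<in> C. P \<subseteq> l}"

definition is_oval :: "'a::{finite,field} vec3 set set \<Rightarrow> bool" where
  "is_oval C \<longleftrightarrow> C \<subseteq> pg_points \<and> card C = CARD('a) + 1 \<and>
     (\<forall>l \<in> pg_lines. card (on_line C l) \<le> 2)"

definition projective_bundle :: "'a::{finite,field} vec3 set set set \<Rightarrow> bool" where
  "projective_bundle \<Gamma> \<longleftrightarrow> (\<forall>C \<in> \<Gamma>. is_oval C) \<and>
     card \<Gamma> = CARD('a)^2 + CARD('a) + 1 \<and>
     (\<forall>C1 \<in> \<Gamma>. \<forall>C2 \<in> \<Gamma>. C1 \<noteq> C2 \<longrightarrow> card (C1 \<inter> C2) = 1)"

definition tangent :: "'a vec3 set set \<Rightarrow> 'a vec3 set \<Rightarrow> bool" where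
  "tangent C l \<longleftrightarrow> card (on_line C l) = 1"

end

theory Submission
  imports Defs
begin

text \<open>Only incidence counts matter: \<open>PG(2,q)\<close> has \<open>q^2 + q + 1\<close> points and a line has
  \<open>q + 1\<close>. Counting the ovals of the bundle that meet a fixed oval shows that every point
  lies on exactly \<open>q + 1\<close> ovals, which pairwise meet only there and so partition the other
  points. Hence at a point \<open>P\<close> of \<open>l\<close> the \<open>q\<close> other points of \<open>l\<close> fall on the \<open>q + 1\<close> ovals
  through \<open>P\<close>, at most one on each, and exactly one oval is tangent. At a point \<open>X\<close> off \<open>l\<close>
  the \<open>q + 1\<close> points of \<open>l\<close> fall two, one or none on each oval through \<open>X\<close>, so the number
  \<open>t X\<close> of tangent ovals through \<open>X\<close> has the parity of \<open>q + 1\<close>. Double counting gives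
  \<open>\<Sum> t = \<Sum> t (t - 1) = q (q + 1)\<close> over the \<open>q^2\<close> points off \<open>l\<close>. For odd \<open>q\<close> all \<open>t\<close> are
  even and \<open>\<Sum> t (t - 2) = 0\<close> forces \<open>t \<in> {0, 2}\<close>; for even \<open>q\<close> all \<open>t\<close> are odd, and
  \<open>s = t - 1\<close> has \<open>\<Sum> s = q\<close>, \<open>\<Sum> s^2 = q^2\<close>, forcing \<open>s X = q\<close> at a single point \<open>X\<close>.\<close>

lemma card_Sigma_Diff_singleton:
  assumes "finite A"
  shows "card (SIGMA x:A. A - {x}) = card A * (card A - 1)"
  using assms by (simp add: card_SigmaI)

lemma card_zeros_eq_1:
  fixes f :: "'b \<Rightarrow> nat"
  assumes "finite A" and "\<And>x. x \<in> A \<Longrightarrow> f x \<le> 1" and "sum f A + 1 = card A"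
  shows "card {x \<in> A. f x = 0} = 1"
proof -
  have "(\<Sum>x\<in>A. 1 - f x) = (\<Sum>x\<in>A. if f x = 0 then 1 else 0)"
    using assms(2) by (intro sum.cong) (auto simp: le_Suc_eq)
  then have "card {x \<in> A. f x = 0} = (\<Sum>x\<in>A. 1 - f x)"
    using assms(1) by (simp add: sum.inter_filter[symmetric])
  moreover have "(\<Sum>x\<in>A. 1 - f x) + sum f A = card A"
    using assms(2) by (simp add: sum.distrib[symmetric])
  ultimately show ?thesis using assms(3) by simp
qed

lemma card_eq_1_imp_ex1: "card {x. P x} = 1 \<Longrightarrow> \<exists>!x. P x"
  by (metis card_1_singletonE mem_Collect_eq singletonD singletonI)

lemma sum_squares_eq_square_sum_imp_term_eq_sum:
  fixes a :: "'b \<Rightarrow> nat"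
  assumes "finite A" and "(\<Sum>x\<in>A. a x ^ 2) = (\<Sum>x\<in>A. a x) ^ 2" and "0 < (\<Sum>x\<in>A. a x)"
  shows "\<exists>x\<in>A. a x = (\<Sum>x\<in>A. a x)"
proof -
  define S where "S = (\<Sum>x\<in>A. a x)"
  have le: "a x ^ 2 \<le> a x * S" if "x \<in> A" for x
    unfolding S_def power2_eq_square using assms(1) that by (intro mult_left_mono member_le_sum) auto
  have "(\<Sum>x\<in>A. a x ^ 2) = (\<Sum>x\<in>A. a x * S)"
    using assms(2) by (simp add: S_def power2_eq_square sum_distrib_right)
  then have eq: "a x ^ 2 = a x * S" if "x \<in> A" for x
    by (rule sum_mono_inv[OF _ le that assms(1)])
  obtain x where x: "x \<in> A" "a x \<noteq> 0"
    using assms(3) by (metis sum.neutral less_irrefl)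
  then have "a x = S" using eq[of x] by (simp add: power2_eq_square)
  then show ?thesis using x(1) unfolding S_def by blast
qed

section \<open>Bundles of ovals\<close>

locale oval_bundle =
  fixes pts :: "'p set" and \<Gamma> :: "'p set set" and q :: nat
  assumes finite_pts: "finite pts"
    and card_pts: "card pts = q^2 + q + 1"
    and q_pos: "0 < q"
    and oval_subset: "C \<in> \<Gamma> \<Longrightarrow> C \<subseteq> pts"
    and card_oval: "C \<in> \<Gamma> \<Longrightarrow> card C = q + 1"
    and card_bundle: "card \<Gamma> = q^2 + q + 1"
    and card_oval_Int: "C \<in> \<Gamma> \<Longrightarrow> D \<in> \<Gamma> \<Longrightarrow> C \<noteq> D \<Longrightarrow> card (C \<inter> D) = 1"
begin

definition ovals_through :: "'p \<Rightarrow> 'p set set" where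
  "ovals_through P = {C \<in> \<Gamma>. P \<in> C}"

lemma finite_bundle: "finite \<Gamma>"
  using card_bundle card.infinite by fastforce

lemma finite_oval: "C \<in> \<Gamma> \<Longrightarrow> finite C"
  using oval_subset finite_pts finite_subset by blast

lemma finite_ovals_through: "finite (ovals_through P)"
  unfolding ovals_through_def using finite_bundle by simp

lemma oval_Int_eq:
  assumes "C \<in> \<Gamma>" "D \<in> \<Gamma>" "C \<noteq> D" "P \<in> C" "P \<in> D"
  shows "C \<inter> D = {P}"
proof -
  obtain x where "C \<inter> D = {x}"
    using card_oval_Int[OF assms(1-3)] by (auto simp: card_1_singleton_iff)
  with assms(4,5) show ?thesis by auto
qed

lemma ovals_through_Int:
  "C \<in> ovals_through P \<Longrightarrow> D \<in> ovals_through P \<Longrightarrow> C \<noteq> D \<Longrightarrow> C \<inter> D = {P}"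
  unfolding ovals_through_def using oval_Int_eq by blast

lemma card_UN_ovals_through:
  assumes "\<And>C. C \<in> ovals_through P \<Longrightarrow> P \<notin> Y C" and "\<And>C. Y C \<subseteq> C"
  shows "card (\<Union>C\<in>ovals_through P. Y C) = (\<Sum>C\<in>ovals_through P. card (Y C))"
proof (rule card_UN_disjoint)
  show "\<forall>C\<in>ovals_through P. \<forall>D\<in>ovals_through P. C \<noteq> D \<longrightarrow> Y C \<inter> Y D = {}"
  proof (intro ballI impI)
    fix C D assume CD: "C \<in> ovals_through P" "D \<in> ovals_through P" "C \<noteq> D"
    have "Y C \<inter> Y D \<subseteq> C \<inter> D"
      using assms(2) by blast
    then show "Y C \<inter> Y D = {}"
      unfolding ovals_through_Int[OF CD] using assms(1)[OF CD(1)] by blast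
  qed
  show "\<forall>C\<in>ovals_through P. finite (Y C)"
    using finite_subset[OF assms(2) finite_oval] by (simp add: ovals_through_def)
qed (rule finite_ovals_through)

lemma card_punctured_ovals_through:
  "card (\<Union>C\<in>ovals_through P. C - {P}) = q * card (ovals_through P)"
proof -
  have "card (\<Union>C\<in>ovals_through P. C - {P}) = (\<Sum>C\<in>ovals_through P. card (C - {P}))"
    by (rule card_UN_ovals_through) auto
  also have "\<dots> = (\<Sum>C\<in>ovals_through P. q)"
    by (intro sum.cong) (auto simp: ovals_through_def card_oval finite_oval)
  finally show ?thesis by simp
qed

lemma punctured_ovals_through_subset: "(\<Union>C\<in>ovals_through P. C - {P}) \<subseteq> pts - {P}"
  unfolding ovals_through_def using oval_subset by blast

lemma card_ovals_through_le:
  assumes "P \<in> pts"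
  shows "card (ovals_through P) \<le> q + 1"
proof -
  have "card (\<Union>C\<in>ovals_through P. C - {P}) \<le> card (pts - {P})"
    using finite_pts punctured_ovals_through_subset by (intro card_mono) auto
  then have "q * card (ovals_through P) \<le> q * (q + 1)"
    unfolding card_punctured_ovals_through using assms card_pts
    by (simp add: power2_eq_square algebra_simps)
  then show ?thesis using q_pos mult_le_cancel1 by blast
qed

text \<open>The other ovals meet \<open>C\<close> once each, so \<open>\<Sum>X\<in>C. (r X - 1) = q^2 + q\<close> where
  \<open>r X = card (ovals_through X) \<le> q + 1\<close>; as \<open>card C = q + 1\<close>, every term equals \<open>q\<close>.\<close>
lemma card_ovals_through_on_oval:
  assumes C: "C \<in> \<Gamma>" and P: "P \<in> C"
  shows "card (ovals_through P) = q + 1"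
proof -
  have split: "\<Gamma> - {C} = (\<Union>X\<in>C. ovals_through X - {C})"
  proof (intro equalityI subsetI)
    fix D assume D: "D \<in> \<Gamma> - {C}"
    then obtain X where "C \<inter> D = {X}"
      using card_oval_Int[OF C] by (auto simp: card_1_singleton_iff)
    then show "D \<in> (\<Union>X\<in>C. ovals_through X - {C})"
      using D by (auto simp: ovals_through_def)
  qed (auto simp: ovals_through_def)
  have disjoint: "(ovals_through X - {C}) \<inter> (ovals_through Y - {C}) = {}"
    if "X \<in> C" "Y \<in> C" "X \<noteq> Y" for X Y
    using oval_Int_eq[OF C] that by (auto simp: ovals_through_def)
  have "card (\<Gamma> - {C}) = (\<Sum>X\<in>C. card (ovals_through X - {C}))"
    unfolding split using finite_oval[OF C] finite_ovals_through disjoint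
    by (intro card_UN_disjoint) auto
  then have sum_eq: "(\<Sum>X\<in>C. card (ovals_through X - {C})) = (\<Sum>X\<in>C. q)"
    using C card_bundle finite_bundle card_oval[OF C] by (simp add: power2_eq_square)
  have "card (ovals_through X - {C}) \<le> q" if "X \<in> C" for X
  proof -
    have "C \<in> ovals_through X"
      using C that by (simp add: ovals_through_def)
    then show ?thesis
      using card_ovals_through_le[of X] that oval_subset[OF C] finite_ovals_through
      by (auto simp: card_Diff_singleton)
  qed
  then have "card (ovals_through P - {C}) = q"
    using sum_mono_inv[OF sum_eq _ P finite_oval[OF C]] by blast
  moreover have "C \<in> ovals_through P"
    using C P by (simp add: ovals_through_def)
  ultimately show ?thesis
    using finite_ovals_through[of P] card_gt_0_iff[of "ovals_through P"]
    by (auto simp: card_Diff_singleton)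
qed

lemma punctured_ovals_through_eq:
  assumes "P \<in> pts" and "card (ovals_through P) = q + 1"
  shows "(\<Union>C\<in>ovals_through P. C - {P}) = pts - {P}"
proof (rule card_subset_eq)
  show "card (\<Union>C\<in>ovals_through P. C - {P}) = card (pts - {P})"
    unfolding card_punctured_ovals_through using assms finite_pts card_pts
    by (simp add: power2_eq_square algebra_simps)
qed (use finite_pts punctured_ovals_through_subset in auto)

lemma card_ovals_through:
  assumes "P \<in> pts"
  shows "card (ovals_through P) = q + 1"
proof -
  obtain C0 where C0: "C0 \<in> \<Gamma>"
    using card_bundle by fastforce
  then obtain P0 where P0: "P0 \<in> C0"
    using card_oval[OF C0] by fastforce
  show ?thesis
  proof (cases "P = P0")
    case False
    then have "P \<in> (\<Union>C\<in>ovals_through P0. C - {P0})"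
      using punctured_ovals_through_eq[OF _ card_ovals_through_on_oval[OF C0 P0]]
        oval_subset[OF C0] P0 assms by blast
    then show ?thesis
      using card_ovals_through_on_oval by (auto simp: ovals_through_def)
  qed (use card_ovals_through_on_oval[OF C0 P0] in simp)
qed

lemma card_eq_sum_ovals_through:
  assumes "P \<in> pts" and "Y \<subseteq> pts - {P}"
  shows "card Y = (\<Sum>C\<in>ovals_through P. card (C \<inter> Y))"
proof -
  have "Y = (\<Union>C\<in>ovals_through P. C \<inter> Y)"
    using punctured_ovals_through_eq[OF assms(1) card_ovals_through[OF assms(1)]] assms(2)
    by blast
  also have "card \<dots> = (\<Sum>C\<in>ovals_through P. card (C \<inter> Y))"
    using assms(2) by (intro card_UN_ovals_through) auto
  finally show ?thesis .
qed

end

section \<open>Tangent ovals of a line\<close>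

locale oval_bundle_line = oval_bundle pts \<Gamma> q for pts :: "'p set" and \<Gamma> and q +
  fixes L :: "'p set"
  assumes line_subset: "L \<subseteq> pts"
    and card_line: "card L = q + 1"
    and card_oval_Int_line: "C \<in> \<Gamma> \<Longrightarrow> card (C \<inter> L) \<le> 2"
begin

definition tangents :: "'p set set" where
  "tangents = {C \<in> \<Gamma>. card (C \<inter> L) = 1}"

definition tangents_through :: "'p \<Rightarrow> 'p set set" where
  "tangents_through X = {C \<in> tangents. X \<in> C}"

lemma finite_tangents: "finite tangents"
  unfolding tangents_def using finite_bundle by simp

lemma finite_line: "finite L"
  using finite_pts line_subset by (rule finite_subset[rotated])

lemma card_tangents_through_on_line:
  assumes P: "P \<in> L"
  shows "card (tangents_through P) = 1"
proof -
  define f where "f C = card (C \<inter> (L - {P}))" for C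
  have card_Int: "card (C \<inter> L) = f C + 1" if "C \<in> ovals_through P" for C
  proof -
    have "C \<inter> L = insert P (C \<inter> (L - {P}))"
      using that P by (auto simp: ovals_through_def)
    then show ?thesis
      using that finite_oval by (simp add: f_def ovals_through_def)
  qed
  have P_pts: "P \<in> pts"
    using line_subset P by blast
  have "q = sum f (ovals_through P)"
    using card_eq_sum_ovals_through[OF P_pts, of "L - {P}"] line_subset card_line finite_line P
    by (auto simp: f_def)
  then have "sum f (ovals_through P) + 1 = card (ovals_through P)"
    using card_ovals_through[OF P_pts] by simp
  moreover have "f C \<le> 1" if "C \<in> ovals_through P" for C
  proof -
    have "C \<in> \<Gamma>"
      using that by (simp add: ovals_through_def)
    then show ?thesis
      using card_oval_Int_line card_Int[OF that] by fastforce
  qed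
  ultimately have "card {C \<in> ovals_through P. f C = 0} = 1"
    using card_zeros_eq_1 finite_ovals_through by blast
  moreover have "{C \<in> ovals_through P. f C = 0} = tangents_through P"
    using card_Int by (auto simp: tangents_through_def tangents_def ovals_through_def)
  ultimately show ?thesis by simp
qed

lemma card_tangents: "card tangents = q + 1"
proof -
  have "tangents = (\<Union>P\<in>L. tangents_through P)"
    by (auto simp: tangents_def tangents_through_def card_1_singleton_iff)
  moreover have "card (\<Union>P\<in>L. tangents_through P) = (\<Sum>P\<in>L. card (tangents_through P))"
  proof (rule card_UN_disjoint)
    show "\<forall>P\<in>L. \<forall>Q\<in>L. P \<noteq> Q \<longrightarrow> tangents_through P \<inter> tangents_through Q = {}"
      unfolding tangents_through_def tangents_def
      by (auto simp: card_1_singleton_iff) (metis IntI singletonD)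
  qed (use finite_line finite_tangents in \<open>auto simp: tangents_through_def\<close>)
  ultimately show ?thesis
    using card_tangents_through_on_line card_line by simp
qed

lemma tangents_Int:
  assumes "C \<in> tangents" "D \<in> tangents" "C \<noteq> D"
  obtains X where "C \<inter> D = {X}" and "X \<in> pts - L"
proof -
  have "card (C \<inter> D) = 1"
    using card_oval_Int assms by (auto simp: tangents_def)
  then obtain X where X: "C \<inter> D = {X}"
    by (auto simp: card_1_singleton_iff)
  have "X \<notin> L"
  proof
    assume "X \<in> L"
    moreover have "C \<in> tangents_through X" "D \<in> tangents_through X"
      using assms X by (auto simp: tangents_through_def)
    ultimately show False
      using card_tangents_through_on_line assms(3) by (metis card_1_singletonE singletonD)
  qed
  moreover have "X \<in> pts"
    using X oval_subset assms(1) by (auto simp: tangents_def)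
  ultimately show thesis
    using that X by blast
qed

lemma even_card_tangents_through_iff:
  assumes "X \<in> pts - L"
  shows "even (card (tangents_through X)) \<longleftrightarrow> odd q"
proof -
  have "q + 1 = (\<Sum>C\<in>ovals_through X. card (C \<inter> L))"
    using card_eq_sum_ovals_through[of X L] assms line_subset card_line by auto
  moreover have "odd n \<longleftrightarrow> n = 1" if "n \<le> 2" for n :: nat
    using that by (auto simp: le_Suc_eq numeral_2_eq_2)
  then have "{C \<in> ovals_through X. odd (card (C \<inter> L))} = tangents_through X"
    using card_oval_Int_line by (auto simp: tangents_through_def tangents_def ovals_through_def)
  ultimately have "even (q + 1) \<longleftrightarrow> even (card (tangents_through X))"
    using even_sum_iff[OF finite_ovals_through, of "\<lambda>C. card (C \<inter> L)" X] by simp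
  then show ?thesis
    by simp
qed

lemma sum_card_tangents_through:
  "(\<Sum>X\<in>pts - L. card (tangents_through X)) = (q + 1) * q"
proof -
  have "card {X \<in> pts - L. X \<in> C} = q" if "C \<in> tangents" for C
  proof -
    have "{X \<in> pts - L. X \<in> C} = C - (C \<inter> L)"
      using oval_subset that by (auto simp: tangents_def)
    then show ?thesis
      using that card_oval finite_oval by (auto simp: tangents_def card_Diff_subset)
  qed
  then have "(\<Sum>X\<in>pts - L. card {C \<in> tangents. X \<in> C}) = q * card tangents"
    using finite_pts finite_tangents by (intro sum_multicount) auto
  then show ?thesis
    by (simp add: tangents_through_def card_tangents)
qed

text \<open>Both sides count the ordered pairs of distinct tangents, which meet exactly once,
  off \<open>L\<close>.\<close>
lemma sum_pairs_tangents_through: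
  "(\<Sum>X\<in>pts - L. card (tangents_through X) * (card (tangents_through X) - 1)) = (q + 1) * q"
proof -
  define pairs where "pairs T = (SIGMA C:T. T - {C})" for T :: "'p set set"
  have "card {X \<in> pts - L. (\<lambda>(C, D). X \<in> C \<and> X \<in> D) CD} = 1" if "CD \<in> pairs tangents" for CD
  proof -
    obtain C D where CD: "CD = (C, D)"
      by (cases CD)
    then have "C \<in> tangents" "D \<in> tangents" "C \<noteq> D"
      using that by (auto simp: pairs_def)
    then obtain X where "C \<inter> D = {X}" "X \<in> pts - L"
      by (rule tangents_Int)
    then have "{X \<in> pts - L. (\<lambda>(C, D). X \<in> C \<and> X \<in> D) CD} = {X}"
      using CD(1) by auto
    then show ?thesis by simp
  qed
  then have "(\<Sum>X\<in>pts - L. card {CD \<in> pairs tangents. (\<lambda>(C, D). X \<in> C \<and> X \<in> D) CD})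
      = 1 * card (pairs tangents)"
    using finite_pts finite_tangents by (intro sum_multicount) (auto simp: pairs_def)
  moreover have "{CD \<in> pairs tangents. (\<lambda>(C, D). X \<in> C \<and> X \<in> D) CD} = pairs (tangents_through X)"
    for X
    by (auto simp: pairs_def tangents_through_def)
  moreover have "finite (tangents_through X)" for X
    using finite_tangents by (simp add: tangents_through_def)
  ultimately show ?thesis
    using card_Sigma_Diff_singleton finite_tangents card_tangents by (simp add: pairs_def)
qed

lemma card_tangents_through_odd_order:
  assumes "odd q" and "X \<in> pts - L"
  shows "card (tangents_through X) = 0 \<or> card (tangents_through X) = 2"
proof -
  define t where "t Y = card (tangents_through Y)" for Y
  have "t Y \<le> t Y * (t Y - 1)" if "Y \<in> pts - L" for Y
    using even_card_tangents_through_iff[OF that] assms(1) by (cases "t Y") (auto simp: t_def dest: odd_pos)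
  moreover have "(\<Sum>Y\<in>pts - L. t Y) = (\<Sum>Y\<in>pts - L. t Y * (t Y - 1))"
    using sum_card_tangents_through sum_pairs_tangents_through by (simp add: t_def)
  ultimately have "t X = t X * (t X - 1)"
    using sum_mono_inv[OF _ _ assms(2)] finite_pts by blast
  then show ?thesis
    by (cases "t X") (auto simp: t_def)
qed

lemma common_point_of_tangents_even_order:
  assumes "even q"
  obtains X where "X \<in> pts - L" and "tangents_through X = tangents"
proof -
  define s where "s Y = card (tangents_through Y) - 1" for Y
  have t_eq: "card (tangents_through Y) = s Y + 1" if "Y \<in> pts - L" for Y
    using even_card_tangents_through_iff[OF that] assms unfolding s_def by presburger
  have card_off: "card (pts - L) = q^2"
    using card_pts card_line line_subset finite_line by (simp add: card_Diff_subset)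
  have sum_t: "(\<Sum>Y\<in>pts - L. g (card (tangents_through Y))) = (\<Sum>Y\<in>pts - L. g (s Y + 1))"
    for g :: "nat \<Rightarrow> nat"
    by (rule sum.cong) (simp_all add: t_eq)
  have "(\<Sum>Y\<in>pts - L. s Y + 1) = (q + 1) * q"
    using sum_card_tangents_through sum_t[of "\<lambda>t. t"] by simp
  moreover have "(\<Sum>Y\<in>pts - L. s Y + 1) = (\<Sum>Y\<in>pts - L. s Y) + q^2"
    using card_off by (simp only: sum.distrib) simp
  ultimately have sum_s: "(\<Sum>Y\<in>pts - L. s Y) = q"
    by (simp add: power2_eq_square algebra_simps)
  have "(\<Sum>Y\<in>pts - L. (s Y + 1) * s Y) = (q + 1) * q"
    using sum_pairs_tangents_through sum_t[of "\<lambda>t. t * (t - 1)"] by simp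
  then have "(\<Sum>Y\<in>pts - L. s Y ^ 2) + (\<Sum>Y\<in>pts - L. s Y) = (q + 1) * q"
    by (simp add: sum.distrib[symmetric] power2_eq_square algebra_simps)
  then have "(\<Sum>Y\<in>pts - L. s Y ^ 2) = (\<Sum>Y\<in>pts - L. s Y) ^ 2"
    using sum_s by (simp add: power2_eq_square algebra_simps)
  then obtain X where X: "X \<in> pts - L" "s X = q"
    using sum_squares_eq_square_sum_imp_term_eq_sum[of "pts - L" s] finite_pts sum_s q_pos by auto
  then have "card (tangents_through X) = card tangents"
    using t_eq card_tangents by simp
  then have "tangents_through X = tangents"
    using finite_tangents by (intro card_subset_eq) (auto simp: tangents_through_def)
  then show thesis
    using that X(1) by blast
qed

end

section \<open>Counting points of \<open>PG(2,q)\<close>\<close>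

lemma smul3_simp [simp]: "smul3 c (x, y, z) = (c * x, c * y, c * z)"
  by (simp add: smul3_def)

lemma add3_simp [simp]: "add3 (x, y, z) (x', y', z') = (x + x', y + y', z + z')"
  by (simp add: add3_def)

lemma smul3_smul3: "smul3 c (smul3 d v) = smul3 (c * d) v"
  by (cases v) (simp add: mult.assoc)

lemma smul3_eq_zero3_iff: "smul3 c v = zero3 \<longleftrightarrow> c = 0 \<or> v = (zero3 :: 'a::field vec3)"
  by (cases v) (auto simp: zero3_def)

lemma smul3_cancel: "v \<noteq> zero3 \<Longrightarrow> smul3 c v = smul3 d v \<Longrightarrow> c = (d :: 'a::field)"
  by (cases v) (auto simp: zero3_def)

lemma span1_self: "v \<in> span1 v"
  unfolding span1_def by (cases v) (auto intro: exI[of _ 1])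

lemma span1_eq_span1:
  assumes "x \<in> span1 v" and "x \<noteq> (zero3 :: 'a::field vec3)"
  shows "span1 x = span1 v"
proof -
  obtain c where x: "x = smul3 c v"
    using assms(1) by (auto simp: span1_def)
  then have "c \<noteq> 0"
    using assms(2) smul3_eq_zero3_iff by blast
  have "smul3 d v = smul3 (d / c) x" for d
    using \<open>c \<noteq> 0\<close> by (simp add: x smul3_smul3)
  then show ?thesis
    unfolding span1_def x smul3_smul3 by (metis smul3_smul3)
qed

lemma card_span1_Diff_zero3:
  assumes "v \<noteq> (zero3 :: 'a::{finite,field} vec3)"
  shows "card (span1 v - {zero3}) = CARD('a) - 1"
proof -
  have "span1 v - {zero3} = (\<lambda>c. smul3 c v) ` (UNIV - {0})"
    using assms by (auto simp: span1_def smul3_eq_zero3_iff dest: sym)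
  moreover have "inj_on (\<lambda>c. smul3 c v) (UNIV - {0})"
    using smul3_cancel[OF assms] by (auto intro: inj_onI)
  ultimately show ?thesis
    by (simp add: card_image card_Diff_singleton)
qed

text \<open>A set of vectors closed under scalars is partitioned, away from \<open>zero3\<close>, by the
  points it contains, each having \<open>q - 1\<close> nonzero vectors.\<close>
lemma card_Diff_zero3_eq:
  fixes S :: "'a::{finite,field} vec3 set"
  assumes "\<And>c v. v \<in> S \<Longrightarrow> smul3 c v \<in> S"
  shows "card (S - {zero3}) = (CARD('a) - 1) * card {span1 v | v. v \<in> S \<and> v \<noteq> zero3}"
proof -
  define pts where "pts = {span1 v | v. v \<in> S \<and> v \<noteq> zero3}"
  have span1_subset: "span1 v \<subseteq> S" if "v \<in> S" for v
    using assms that unfolding span1_def by blast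
  have S_eq: "S - {zero3} = (\<Union>P\<in>pts. P - {zero3})"
  proof (intro equalityI subsetI)
    fix x assume "x \<in> S - {zero3}"
    then show "x \<in> (\<Union>P\<in>pts. P - {zero3})"
      using span1_self[of x] unfolding pts_def by blast
  next
    fix x assume "x \<in> (\<Union>P\<in>pts. P - {zero3})"
    then obtain v where "v \<in> S" "x \<in> span1 v" "x \<noteq> zero3"
      unfolding pts_def by blast
    then show "x \<in> S - {zero3}"
      using span1_subset by blast
  qed
  have disjoint: "(P - {zero3}) \<inter> (Q - {zero3}) = {}"
    if PQ: "P \<in> pts" "Q \<in> pts" "P \<noteq> Q" for P Q
  proof (rule equals0I)
    fix x assume x: "x \<in> (P - {zero3}) \<inter> (Q - {zero3})"
    obtain v w where vw: "P = span1 v" "Q = span1 w"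
      using PQ(1,2) unfolding pts_def by blast
    have "x \<in> span1 v" "x \<in> span1 w" "x \<noteq> zero3"
      using x unfolding vw by blast+
    then have "span1 x = P" "span1 x = Q"
      unfolding vw by (metis span1_eq_span1)+
    with PQ(3) show False by simp
  qed
  have "card (\<Union>P\<in>pts. P - {zero3}) = (\<Sum>P\<in>pts. card (P - {zero3}))"
    using disjoint by (intro card_UN_disjoint) auto
  also have "\<dots> = (\<Sum>P\<in>pts. CARD('a) - 1)"
    using card_span1_Diff_zero3 by (intro sum.cong) (auto simp: pts_def)
  finally show ?thesis
    unfolding S_eq by (simp add: pts_def)
qed

lemma two_le_card_field: "2 \<le> CARD('a::{finite,field})"
  using card_mono[of UNIV "{0::'a, 1}"] by simp

lemma card_pg_points: "card (pg_points :: 'a::{finite,field} vec3 set set) = CARD('a)^2 + CARD('a) + 1"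
proof -
  define q where "q = CARD('a)"
  have "(q - 1) * card (pg_points :: 'a vec3 set set) = q^3 - 1"
    using card_Diff_zero3_eq[of "UNIV :: 'a vec3 set"]
    by (simp add: pg_points_def q_def power3_eq_cube)
  also have "q^3 - 1 = (q - 1) * (q^2 + q + 1)"
    by (cases q) (simp_all add: power2_eq_square power3_eq_cube algebra_simps)
  finally have "(q - 1) * card (pg_points :: 'a vec3 set set) = (q - 1) * (q^2 + q + 1)" .
  moreover have "q - 1 \<noteq> 0"
    using two_le_card_field[where 'a='a] by (simp add: q_def)
  ultimately show ?thesis
    unfolding q_def[symmetric] by (metis mult_left_cancel)
qed

lemma card_span2:
  assumes "lin_indep2 u (w :: 'a::{finite,field} vec3)"
  shows "card (span2 u w) = CARD('a)^2"
proof -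
  have "span2 u w = (\<lambda>(s, t). add3 (smul3 s u) (smul3 t w)) ` UNIV"
  proof (intro equalityI subsetI)
    fix x assume "x \<in> span2 u w"
    then obtain s t where "x = add3 (smul3 s u) (smul3 t w)"
      by (auto simp: span2_def)
    then show "x \<in> (\<lambda>(s, t). add3 (smul3 s u) (smul3 t w)) ` UNIV"
      by (auto intro: image_eqI[of _ _ "(s, t)"])
  qed (auto simp: span2_def)
  moreover have "inj (\<lambda>(s, t). add3 (smul3 s u) (smul3 t w))"
  proof (rule injI, clarify)
    fix s t s' t'
    assume "add3 (smul3 s u) (smul3 t w) = add3 (smul3 s' u) (smul3 t' w)"
    then have "add3 (smul3 (s - s') u) (smul3 (t - t') w) = zero3"
      by (cases u, cases w) (simp add: zero3_def algebra_simps)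
    then have "s - s' = 0 \<and> t - t' = 0"
      using assms unfolding lin_indep2_def by blast
    then show "s = s' \<and> t = t'"
      by simp
  qed
  ultimately show ?thesis
    by (simp add: card_image power2_eq_square)
qed

lemma card_line_points:
  assumes "l \<in> (pg_lines :: 'a::{finite,field} vec3 set set)"
  shows "card (on_line pg_points l) = CARD('a) + 1"
proof -
  define q where "q = CARD('a)"
  obtain u w where l: "l = span2 u w" "lin_indep2 u w"
    using assms by (auto simp: pg_lines_def)
  have closed: "smul3 c v \<in> l" if v: "v \<in> l" for c v
  proof -
    obtain s t where "v = add3 (smul3 s u) (smul3 t w)"
      using v unfolding l span2_def by blast
    then have "smul3 c v = add3 (smul3 (c * s) u) (smul3 (c * t) w)"
      by (cases u, cases w) (simp add: algebra_simps)
    then show ?thesis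
      by (auto simp: l span2_def)
  qed
  have zero: "zero3 \<in> l"
    unfolding l span2_def by (cases u, cases w) (auto simp: zero3_def intro!: exI[of _ 0])
  have span1_subset: "span1 v \<subseteq> l" if "v \<in> l" for v
    using closed that unfolding span1_def by blast
  have "on_line pg_points l = {span1 v | v. v \<in> l \<and> v \<noteq> zero3}"
  proof (intro equalityI subsetI)
    fix P assume "P \<in> on_line pg_points l"
    then obtain v where "P = span1 v" "v \<noteq> zero3" "P \<subseteq> l"
      by (auto simp: on_line_def pg_points_def)
    then show "P \<in> {span1 v | v. v \<in> l \<and> v \<noteq> zero3}"
      using span1_self by blast
  next
    fix P assume "P \<in> {span1 v | v. v \<in> l \<and> v \<noteq> zero3}"
    then obtain v where "P = span1 v" "v \<in> l" "v \<noteq> zero3"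
      by blast
    then show "P \<in> on_line pg_points l"
      using span1_subset unfolding on_line_def pg_points_def by blast
  qed
  then have "(q - 1) * card (on_line pg_points l) = q^2 - 1"
    using card_Diff_zero3_eq[OF closed] card_span2[OF l(2)] zero
    by (simp add: l(1)[symmetric] q_def)
  also have "q^2 - 1 = (q - 1) * (q + 1)"
    by (cases q) (simp_all add: power2_eq_square algebra_simps)
  finally have "(q - 1) * card (on_line pg_points l) = (q - 1) * (q + 1)" .
  moreover have "q - 1 \<noteq> 0"
    using two_le_card_field[where 'a='a] by (simp add: q_def)
  ultimately show ?thesis
    unfolding q_def[symmetric] by (metis mult_left_cancel)
qed

lemma on_line_eq_Int: "C \<subseteq> pg_points \<Longrightarrow> on_line C l = C \<inter> on_line pg_points l"
  by (auto simp: on_line_def)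

lemma oval_bundle_line_of_projective_bundle:
  fixes \<Gamma> :: "'a::{finite,field} vec3 set set set"
  assumes "projective_bundle \<Gamma>" and "l \<in> pg_lines"
  shows "oval_bundle_line pg_points \<Gamma> CARD('a) (on_line pg_points l)"
proof -
  have oval: "C \<subseteq> pg_points" "card C = CARD('a) + 1" "card (C \<inter> on_line pg_points l) \<le> 2"
    if "C \<in> \<Gamma>" for C
  proof -
    have oval: "C \<subseteq> pg_points \<and> card C = CARD('a) + 1 \<and> (\<forall>l \<in> pg_lines. card (on_line C l) \<le> 2)"
      using assms(1) that by (simp add: projective_bundle_def is_oval_def)
    then show "C \<subseteq> pg_points" "card C = CARD('a) + 1"
      by simp_all
    have "card (on_line C l) \<le> 2"
      using oval assms(2) by blast
    then show "card (C \<inter> on_line pg_points l) \<le> 2"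
      using oval on_line_eq_Int[of C l] by simp
  qed
  show ?thesis
  proof unfold_locales
    show "0 < CARD('a)"
      using two_le_card_field[where 'a='a] by simp
    show "card \<Gamma> = CARD('a)^2 + CARD('a) + 1"
      "\<And>C D. C \<in> \<Gamma> \<Longrightarrow> D \<in> \<Gamma> \<Longrightarrow> C \<noteq> D \<Longrightarrow> card (C \<inter> D) = 1"
      using assms(1) by (auto simp: projective_bundle_def)
    show "on_line pg_points l \<subseteq> pg_points" "card (on_line pg_points l) = CARD('a) + 1"
      using card_line_points[OF assms(2)] by (auto simp: on_line_def)
  qed (simp_all add: oval card_pg_points)
qed

theorem lemma4p6:
  fixes \<Gamma> :: "'a::{finite,field} vec3 set set set"
    and l :: "'a vec3 set"
  assumes "projective_bundle \<Gamma>"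
    and "l \<in> pg_lines"
  shows "card {C \<in> \<Gamma>. tangent C l} = CARD('a) + 1
    \<and> (\<forall>P \<in> on_line pg_points l. \<exists>!C. C \<in> \<Gamma> \<and> tangent C l \<and> P \<in> C)
    \<and> (even (CARD('a)) \<longrightarrow> (\<exists>P \<in> pg_points. \<forall>C \<in> {C \<in> \<Gamma>. tangent C l}. P \<in> C))
    \<and> (odd (CARD('a)) \<longrightarrow> (\<forall>P \<in> pg_points. \<not> P \<subseteq> l \<longrightarrow>
          card {C \<in> \<Gamma>. tangent C l \<and> P \<in> C} = 0 \<or> card {C \<in> \<Gamma>. tangent C l \<and> P \<in> C} = 2))"
proof -
  interpret oval_bundle_line pg_points \<Gamma> "CARD('a)" "on_line pg_points l"
    using assms by (rule oval_bundle_line_of_projective_bundle)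
  have tangent_iff: "C \<in> \<Gamma> \<and> tangent C l \<longleftrightarrow> C \<in> tangents" for C
  proof (cases "C \<in> \<Gamma>")
    case True
    then show ?thesis
      using on_line_eq_Int[OF oval_subset] by (simp add: tangent_def tangents_def)
  qed (simp add: tangents_def)
  have tangents_through_eq: "{C \<in> \<Gamma>. tangent C l \<and> P \<in> C} = tangents_through P" for P
    unfolding conj_assoc[symmetric] tangent_iff tangents_through_def by simp
  show ?thesis
  proof (intro conjI ballI impI)
    show "card {C \<in> \<Gamma>. tangent C l} = CARD('a) + 1"
      unfolding tangent_iff by (simp add: card_tangents)
    show "\<exists>!C. C \<in> \<Gamma> \<and> tangent C l \<and> P \<in> C" if "P \<in> on_line pg_points l" for P
      using card_tangents_through_on_line[OF that] unfolding tangents_through_eq[symmetric]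
      by (rule card_eq_1_imp_ex1)
  next
    assume "even (CARD('a))"
    then obtain X where X: "X \<in> pg_points - on_line pg_points l" "tangents_through X = tangents"
      by (rule common_point_of_tangents_even_order)
    then have "\<forall>C \<in> tangents. X \<in> C"
      unfolding tangents_through_def by blast
    then show "\<exists>P \<in> pg_points. \<forall>C \<in> {C \<in> \<Gamma>. tangent C l}. P \<in> C"
      unfolding tangent_iff using X(1) by auto
  next
    fix P assume "odd (CARD('a))" "P \<in> pg_points" "\<not> P \<subseteq> l"
    then show "card {C \<in> \<Gamma>. tangent C l \<and> P \<in> C} = 0 \<or> card {C \<in> \<Gamma>. tangent C l \<and> P \<in> C} = 2"
      unfolding tangents_through_eq by (intro card_tangents_through_odd_order) (auto simp: on_line_def)
  qed
qed

end
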